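(* Let $p>2$ be an even integer such that $p/2$ is odd. Then there exists a subset $\mathcal{X}$ of $\mathbb{P}^2_\circ$ with $|\mathcal{X}|=|B(2,p-1)\cap\mathbb{P}^2_\circ|+1$ and $$\kappa(\mathcal{X})\le\kappa(B(2,p-1)\cap\mathbb{P}^2_\circ)+\frac{p}{2}+1.$$ Moreover, every subset $\mathcal{X}$ of $\mathbb{P}^2_\circ$ with these two properties satisfies at least one of: (i) some point of $B(2,p-1)\cap\mathbb{P}^2_\circ$ is not in $\mathcal{X}$; (ii) some point of $\mathcal{X}$ is not in $B(2,p)\cap\mathbb{P}^2_\circ$.
   Context: A point of $\mathbb{Z}^2$ is primitive if its coordinates are relatively prime; $\mathbb{P}^2_\circ$ denotes the set of primitive points of $\mathbb{Z}^2$ whose first non-zero coordinate is positive. $B(2,p)=\{x\in\mathbb{R}^2:\|x\|_1\le p\}$. For a finite $\mathcal{X}\subset\mathbb{R}^2$, $\kappa(\mathcal{X})=\max_{i\in\{1,2\}}\sum_{x\in\mathcal{X}}|x_i|$. *)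

theory Defs
  imports Main
begin

definition primitive :: "int \<times> int \<Rightarrow> bool" where
  "primitive x \<longleftrightarrow> coprime (fst x) (snd x)"

definition P2o :: "(int \<times> int) set" where
  "P2o = {x. primitive x \<and> (fst x > 0 \<or> (fst x = 0 \<and> snd x > 0))}"

definition B2 :: "int \<Rightarrow> (int \<times> int) set" where
  "B2 p = {x. \<bar>fst x\<bar> + \<bar>snd x\<bar> \<le> p}"

definition kappa :: "(int \<times> int) set \<Rightarrow> int" where
  "kappa X = max (\<Sum>x\<in>X. \<bar>fst x\<bar>) (\<Sum>x\<in>X. \<bar>snd x\<bar>)"

end

theory Submission
  imports Defs
begin

text \<open>
  The map \<open>(a, b) \<mapsto> \<plusminus>(b, a)\<close>, with the sign chosen to land in \<open>P2o\<close>, is an involution of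
  \<open>P2o\<close> preserving every l1-ball, so both coordinate sums of \<open>S = B(2,p-1) \<inter> P2o\<close> equal
  \<open>\<kappa>(S)\<close>. Writing \<open>p = 2q\<close>, replacing \<open>(1, p-2)\<close> in \<open>S\<close> by \<open>(1, p-1)\<close> and \<open>(q+1, q)\<close> raises
  both sums by exactly \<open>q + 1\<close>. Conversely, a set \<open>S \<union> {y}\<close> with \<open>\<parallel>y\<parallel>\<^sub>1 = p\<close> obeying the bound
  needs \<open>|y\<^sub>1|, |y\<^sub>2| \<le> q + 1\<close>, i.e. \<open>|y\<^sub>1| \<in> {q-1, q, q+1}\<close>: then \<open>q\<close> (resp. \<open>2\<close>, as \<open>q\<close> is odd)
  divides both coordinates, contradicting primitivity.
\<close>

definition swap_P2o :: "int \<times> int \<Rightarrow> int \<times> int" where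
  "swap_P2o x = (if snd x \<ge> 0 then (snd x, fst x) else (- snd x, - fst x))"

lemma swap_P2o_in_P2o: "x \<in> P2o \<Longrightarrow> swap_P2o x \<in> P2o"
  by (cases x) (auto simp: swap_P2o_def P2o_def primitive_def coprime_commute)

lemma swap_P2o_swap_P2o: "x \<in> P2o \<Longrightarrow> swap_P2o (swap_P2o x) = x"
  by (cases x) (auto simp: swap_P2o_def P2o_def primitive_def)

lemma swap_P2o_in_B2_iff: "swap_P2o x \<in> B2 r \<longleftrightarrow> x \<in> B2 r"
  by (cases x) (auto simp: swap_P2o_def B2_def)

lemma finite_B2: "finite (B2 r)"
proof (rule finite_subset)
  show "B2 r \<subseteq> {-r..r} \<times> {-r..r}" by (auto simp: B2_def)
qed auto

lemma sum_abs_fst_eq_sum_abs_snd_B2_P2o: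
  "(\<Sum>x\<in>B2 r \<inter> P2o. \<bar>fst x\<bar>) = (\<Sum>x\<in>B2 r \<inter> P2o. \<bar>snd x\<bar>)"
proof -
  let ?S = "B2 r \<inter> P2o"
  have bij: "bij_betw swap_P2o ?S ?S"
    by (rule bij_betw_byWitness[where f' = swap_P2o])
       (auto simp: swap_P2o_swap_P2o swap_P2o_in_P2o swap_P2o_in_B2_iff)
  have "(\<Sum>x\<in>?S. \<bar>fst x\<bar>) = (\<Sum>x\<in>?S. \<bar>fst (swap_P2o x)\<bar>)"
    using sum.reindex_bij_betw[OF bij, of "\<lambda>x. \<bar>fst x\<bar>"] by simp
  also have "\<dots> = (\<Sum>x\<in>?S. \<bar>snd x\<bar>)"
    by (rule sum.cong) (auto simp: swap_P2o_def)
  finally show ?thesis .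
qed

lemma sum_exchange_one_for_two:
  fixes f :: "'a \<Rightarrow> 'b::ab_group_add"
  assumes "finite S" "z \<in> S" "u \<notin> S" "v \<notin> S" "u \<noteq> v"
  shows "sum f (insert u (insert v (S - {z}))) = f u + f v + sum f S - f z"
  using assms by (simp add: sum.remove[OF assms(1,2)] algebra_simps)

lemma primitive_l1_sphere_coordinate_bound:
  fixes a b q :: int
  assumes "coprime a b" "\<bar>a\<bar> + \<bar>b\<bar> = 2 * q" "odd q" "q > 1"
  shows "\<bar>a\<bar> \<ge> q + 2 \<or> \<bar>b\<bar> \<ge> q + 2"
proof (rule ccontr)
  assume "\<not> ?thesis"
  then consider "\<bar>a\<bar> = q" "\<bar>b\<bar> = q" | "\<bar>a\<bar> \<in> {q - 1, q + 1}" "\<bar>b\<bar> \<in> {q - 1, q + 1}"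
    using assms(2) by fastforce
  then have "is_unit q \<or> is_unit (2::int)"
  proof cases
    case 1
    then have "q dvd \<bar>a\<bar>" "q dvd \<bar>b\<bar>" by simp_all
    then have "q dvd a" "q dvd b" by simp_all
    then show ?thesis using assms(1) coprime_common_divisor by blast
  next
    case 2
    moreover have "even (q - 1)" "even (q + 1)" using assms(3) by simp_all
    ultimately have "even \<bar>a\<bar>" "even \<bar>b\<bar>" by (auto simp del: dvd_abs_iff)
    then have "2 dvd a" "2 dvd b" by simp_all
    then show ?thesis using assms(1) coprime_common_divisor by blast
  qed
  then show False using assms(4) by auto
qed

lemma exists_exchange_B2_P2o:
  fixes q :: int
  assumes "q > 1"
  defines "S \<equiv> B2 (2 * q - 1) \<inter> P2o"
  shows "\<exists>X. X \<subseteq> P2o \<and> finite X \<and> card X = card S + 1 \<and> kappa X \<le> kappa S + q + 1"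
proof -
  define z u v where "z = (1::int, 2 * q - 2)" and "u = (1::int, 2 * q - 1)" and "v = (q + 1, q)"
  define X where "X = insert u (insert v (S - {z}))"
  have finS: "finite S" by (simp add: S_def finite_B2)
  have z: "z \<in> S" and u: "u \<in> P2o" "u \<notin> S" and v: "v \<in> P2o" "v \<notin> S" and "u \<noteq> v"
    using assms(1) by (auto simp: z_def u_def v_def S_def B2_def P2o_def primitive_def)
  note exchange = sum_exchange_one_for_two[OF finS z u(2) v(2) \<open>u \<noteq> v\<close>]
  have "card X = card S + 1"
    using finS z u v \<open>u \<noteq> v\<close> card.remove[OF finS z] by (simp add: X_def)
  moreover have "kappa X \<le> kappa S + q + 1"
    using exchange[of "\<lambda>x. \<bar>fst x\<bar>"] exchange[of "\<lambda>x. \<bar>snd x\<bar>"] assms(1)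
      sum_abs_fst_eq_sum_abs_snd_B2_P2o[of "2 * q - 1"]
    by (simp add: kappa_def X_def S_def z_def u_def v_def)
  moreover have "X \<subseteq> P2o" "finite X"
    using u v finS by (auto simp: X_def S_def)
  ultimately show ?thesis by blast
qed

lemma kappa_extension_B2_P2o_gt:
  fixes q :: int
  assumes "odd q" "q > 1"
  defines "S \<equiv> B2 (2 * q - 1) \<inter> P2o"
  assumes "S \<subseteq> X" "X \<subseteq> B2 (2 * q) \<inter> P2o" "finite X" "card X = card S + 1"
  shows "kappa X > kappa S + q + 1"
proof -
  have finS: "finite S" by (simp add: S_def finite_B2)
  have "card (X - S) = 1"
    using assms(7) card_Diff_subset[OF finS assms(4)] by simp
  then obtain y where "X - S = {y}" by (auto simp: card_Suc_eq)
  then have X: "X = insert y S" and yS: "y \<notin> S" using assms(4) by auto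
  have "y \<in> B2 (2 * q) \<inter> P2o" using assms(5) X by auto
  then have "\<bar>fst y\<bar> + \<bar>snd y\<bar> = 2 * q" and "coprime (fst y) (snd y)"
    using yS by (auto simp: S_def B2_def P2o_def primitive_def)
  then have "\<bar>fst y\<bar> \<ge> q + 2 \<or> \<bar>snd y\<bar> \<ge> q + 2"
    using primitive_l1_sphere_coordinate_bound assms(1,2) by blast
  then show ?thesis
    using finS yS sum_abs_fst_eq_sum_abs_snd_B2_P2o[of "2 * q - 1"]
    by (auto simp: X kappa_def S_def)
qed

theorem proposition5p2:
  fixes p :: int
  assumes "p > 2" and "even p" and "odd (p div 2)"
  shows "(\<exists>X. X \<subseteq> P2o \<and> finite X \<and> card X = card (B2 (p - 1) \<inter> P2o) + 1 \<and>
              kappa X \<le> kappa (B2 (p - 1) \<inter> P2o) + p div 2 + 1)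
       \<and> (\<forall>X. X \<subseteq> P2o \<and> finite X \<and> card X = card (B2 (p - 1) \<inter> P2o) + 1 \<and>
              kappa X \<le> kappa (B2 (p - 1) \<inter> P2o) + p div 2 + 1 \<longrightarrow>
              ((\<exists>x\<in>B2 (p - 1) \<inter> P2o. x \<notin> X) \<or> (\<exists>x\<in>X. x \<notin> B2 p \<inter> P2o)))"
proof -
  obtain q where p: "p = 2 * q" using assms(2) by (rule evenE)
  have q: "odd q" "q > 1" using assms(1,3) unfolding p by simp_all
  have half: "2 * q div 2 = q" by simp
  show ?thesis
    unfolding p half
  proof (intro conjI allI impI)
    show "\<exists>X. X \<subseteq> P2o \<and> finite X \<and> card X = card (B2 (2 * q - 1) \<inter> P2o) + 1 \<and>
              kappa X \<le> kappa (B2 (2 * q - 1) \<inter> P2o) + q + 1"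
      using exists_exchange_B2_P2o[OF q(2)] .
  next
    fix X
    assume "X \<subseteq> P2o \<and> finite X \<and> card X = card (B2 (2 * q - 1) \<inter> P2o) + 1 \<and>
              kappa X \<le> kappa (B2 (2 * q - 1) \<inter> P2o) + q + 1"
    then show "(\<exists>x\<in>B2 (2 * q - 1) \<inter> P2o. x \<notin> X) \<or> (\<exists>x\<in>X. x \<notin> B2 (2 * q) \<inter> P2o)"
      using kappa_extension_B2_P2o_gt[OF q, of X] by (meson not_less subsetI)
  qed
qed

end
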